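(* Let $0<a<b$ and let $R_n, C_n$ be the effective resistance and effective conductance of the random network $T_n$ defined in the context. There exists a constant $K$ (depending only on $a,b$) such that for all $t>0$ and $n\ge1$, $$\mathbb{P}\left(\left|R_n-\frac{1}{\mathbb{E}C_n}\right|>t\right)\le \frac{K}{t^2},$$ and consequently $\mathbb{E}\left|R_n-1/\mathbb{E}C_n\right|\le 1+K$.
   Context: For $n\ge1$, $T_n$ is the edge-rooted tree consisting of a root vertex $r$ joined by a single edge to a vertex $v$, where $v$ is the root of a complete binary tree with $n-1$ levels (so $T_n$ has $2^{n-1}$ leaves at distance $n$ from $r$). The depth $d(e)$ of an edge $e$ is the number of edges on the path that starts with $e$ and ends at $r$; the edge at $r$ has depth $1$. Each edge $e$ is given resistance $r_e=2^{d(e)-1}X_e$, with the $X_e$ i.i.d. copies of a random variable $X$ taking values in $[a,b]$, $0<a<b$. $R_n$ is the effective resistance between $r$ and the set of leaves of $T_n$, and $C_n=1/R_n$ is the effective conductance. *)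

theory Defs
  imports "HOL-Probability.Probability"
begin

text \<open>Edges of T_n are encoded by bool lists: the list p encodes the edge of depth
  length p + 1 reached from v by following the turns p (the empty list is the edge
  at the root r).\<close>

definition tree_edges :: "nat \<Rightarrow> bool list set" where
  "tree_edges n = {p. length p < n}"

text \<open>Resistance of edge p: 2^(d(e)-1) * X_e with d(e) = length p + 1.\<close>
definition edge_res :: "(bool list \<Rightarrow> real) \<Rightarrow> bool list \<Rightarrow> real" where
  "edge_res X p = 2 ^ length p * X p"

text \<open>sub_res X m p: effective resistance between the top endpoint of edge p and the
  leaves below it, where m is the number of edges on each path from there to a leaf
  (series/parallel reduction, which computes the effective resistance on a tree).\<close>
fun sub_res :: "(bool list \<Rightarrow> real) \<Rightarrow> nat \<Rightarrow> bool list \<Rightarrow> real" where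
  "sub_res X 0 p = 0"
| "sub_res X (Suc 0) p = edge_res X p"
| "sub_res X (Suc (Suc m)) p = edge_res X p +
     1 / (1 / sub_res X (Suc m) (p @ [False]) + 1 / sub_res X (Suc m) (p @ [True]))"

definition eff_res :: "(bool list \<Rightarrow> real) \<Rightarrow> nat \<Rightarrow> real" where
  "eff_res X n = sub_res X n []"

definition eff_cond :: "(bool list \<Rightarrow> real) \<Rightarrow> nat \<Rightarrow> real" where
  "eff_cond X n = 1 / eff_res X n"

definition tree_space :: "real measure \<Rightarrow> nat \<Rightarrow> (bool list \<Rightarrow> real) measure" where
  "tree_space D n = PiM (tree_edges n) (\<lambda>_. D)"

end

theory Submission
  imports Defs
begin

(*
  Work with conductances rescaled by the depth factor: if C_m denotes the rescaled conductance
  of a complete subtree with m levels, then C_{m+1} = 1 / (X + 2 / (C_m' + C_m'')) with X the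
  weight of the top edge and C_m', C_m'' independent copies of C_m, and C_m always lies in
  [1 / (b m), 1 / (a m)]. Comparing C_{m+1} with the value at the deterministic point X = a,
  C_m' = C_m'' = E C_m gives Var C_{m+1} <= 5/16 (Var C_m' + Var C_m'') + O(m^-4), and this
  recursion yields Var C_m = O(m^-4). Since R_n = 1 / C_n and both C_n and E C_n are at least
  1 / (b n), E (R_n - 1 / E C_n)^2 <= (b n)^4 Var C_n is bounded, and the theorem follows by
  Chebyshev's inequality and E |Y| <= 1 + E Y^2.
*)

section \<open>Rescaled subtree conductances\<close>

text \<open>The factor 2 ^ length p compensates the edge resistances 2 ^ length p * X p, so that
  the recursion for sub_cond does not depend on the depth of p.\<close>

definition sub_cond :: "(bool list \<Rightarrow> real) \<Rightarrow> nat \<Rightarrow> bool list \<Rightarrow> real" where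
  "sub_cond X m p = 2 ^ length p / sub_res X m p"

lemma eff_cond_eq_sub_cond: "eff_cond X n = sub_cond X n []"
  by (simp add: eff_cond_def eff_res_def sub_cond_def)

lemma eff_res_eq_inverse_sub_cond: "eff_res X n = 1 / sub_cond X n []"
  by (simp add: eff_res_def sub_cond_def)

lemma sub_cond_Suc_0: "sub_cond X (Suc 0) p = 1 / X p"
  by (simp add: sub_cond_def edge_res_def)

lemma sub_cond_Suc_Suc:
  "sub_cond X (Suc (Suc m)) p =
     1 / (X p + 2 / (sub_cond X (Suc m) (p @ [False]) + sub_cond X (Suc m) (p @ [True])))"
proof -
  define k where "k = length p"
  define r0 where "r0 = sub_res X (Suc m) (p @ [False])"
  define r1 where "r1 = sub_res X (Suc m) (p @ [True])"
  have "1 / r0 + 1 / r1 =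
      (sub_cond X (Suc m) (p @ [False]) + sub_cond X (Suc m) (p @ [True])) / 2 ^ (k + 1)"
    by (simp add: sub_cond_def r0_def r1_def k_def add_divide_distrib)
  then have "sub_cond X (Suc (Suc m)) p =
      2 ^ k / (2 ^ k * (X p + 2 / (sub_cond X (Suc m) (p @ [False]) + sub_cond X (Suc m) (p @ [True]))))"
    by (simp add: sub_cond_def edge_res_def r0_def r1_def k_def algebra_simps)
  then show ?thesis by simp
qed

lemma sub_res_cong:
  "(\<And>q. length q < m \<Longrightarrow> X (p @ q) = Y (p @ q)) \<Longrightarrow> sub_res X m p = sub_res Y m p"
proof (induction X m p rule: sub_res.induct)
  case (2 X p)
  then show ?case using 2[of "[]"] by (simp add: edge_res_def)
next
  case (3 X m p)
  have "sub_res X (Suc m) (p @ [c]) = sub_res Y (Suc m) (p @ [c])" for c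
    using 3(1,2) 3(3)[of "c # _"] by (cases c) auto
  then show ?case using 3(3)[of "[]"] by (simp add: edge_res_def)
qed simp

lemma sub_cond_bounds:
  assumes "0 < a" "1 \<le> m" "\<And>q. length q < m \<Longrightarrow> a \<le> X (p @ q) \<and> X (p @ q) \<le> b"
  shows "1 / (b * m) \<le> sub_cond X m p \<and> sub_cond X m p \<le> 1 / (a * m)"
  using assms(2,3)
proof (induction m arbitrary: p rule: nat_induct_at_least)
  case base
  then show ?case using assms(1) base[of "[]"] by (simp add: sub_cond_Suc_0 frac_le)
next
  case (Suc m)
  obtain k where k: "m = Suc k" using Suc(1) by (cases m) auto
  define s where "s = sub_cond X m (p @ [False]) + sub_cond X m (p @ [True])"
  have c: "1 / (b * m) \<le> sub_cond X m (p @ [c]) \<and> sub_cond X m (p @ [c]) \<le> 1 / (a * m)" for c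
    by (rule Suc(2)) (use Suc(3)[of "c # _"] in auto)
  have s: "2 / (b * m) \<le> s" "s \<le> 2 / (a * m)"
    using c[of False] c[of True] unfolding s_def by auto
  have X: "a \<le> X p" "X p \<le> b" using Suc(3)[of "[]"] by auto
  have mpos: "0 < real m" using Suc(1) by simp
  have "0 < 2 / (b * m)" using X assms(1) mpos by simp
  then have "0 < s" using s(1) by linarith
  then have "a * m \<le> 2 / s" "2 / s \<le> b * m"
    using s assms(1) X mpos by (auto simp: field_simps)
  then have l: "a * Suc m \<le> X p + 2 / s" and u: "X p + 2 / s \<le> b * Suc m"
    using X by (auto simp: algebra_simps)
  have "0 < X p" using X assms(1) by linarith
  with \<open>0 < s\<close> have pos: "0 < X p + 2 / s" by (simp add: add_pos_pos)
  have "1 / (b * Suc m) \<le> 1 / (X p + 2 / s)"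
    by (rule divide_left_mono[OF u]) (use pos X assms(1) in \<open>auto intro!: mult_pos_pos\<close>)
  moreover have "1 / (X p + 2 / s) \<le> 1 / (a * Suc m)"
    by (rule divide_left_mono[OF l]) (use pos assms(1) in auto)
  moreover have "sub_cond X (Suc m) p = 1 / (X p + 2 / s)"
    unfolding k s_def by (rule sub_cond_Suc_Suc)
  ultimately show ?case by simp
qed

section \<open>Scalar estimates\<close>

lemma sq_diff_inverse_le:
  fixes l x y :: real
  assumes "0 < l" "l \<le> x" "l \<le> y"
  shows "(1 / x - 1 / y)\<^sup>2 \<le> (x - y)\<^sup>2 / l ^ 4"
proof -
  have "l\<^sup>2 \<le> x * y" using assms by (simp add: power2_eq_square mult_mono)
  then have "(l\<^sup>2)\<^sup>2 \<le> (x * y)\<^sup>2" using assms by (intro power_mono) auto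
  then have "(x - y)\<^sup>2 / (x * y)\<^sup>2 \<le> (x - y)\<^sup>2 / (l\<^sup>2)\<^sup>2"
    using assms by (intro divide_left_mono) auto
  moreover have "1 / x - 1 / y = (y - x) / (x * y)" using assms by (simp add: field_simps)
  ultimately show ?thesis by (simp add: power_divide power2_commute flip: power_mult)
qed

lemma sq_diff_series_cond_le:
  fixes a b x s \<mu> m :: real
  assumes "0 < a" "a \<le> x" "x \<le> b" "0 < m" "0 < s" "1 / (b * m) \<le> \<mu>" "\<mu> \<le> 1 / (a * m)"
  shows "(1 / (x + 1 / s) - 1 / (a + 1 / \<mu>))\<^sup>2
      \<le> 5/4 * (s - \<mu>)\<^sup>2 + 5 * ((b - a)\<^sup>2 / (a ^ 4 * (m + 1) ^ 4))"
proof -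
  have "0 < \<mu>" using assms by (smt (verit) divide_pos_pos mult_pos_pos)
  define p where "p = 1 / (x + 1 / s) - 1 / (x + 1 / \<mu>)"
  define q where "q = 1 / (x + 1 / \<mu>) - 1 / (a + 1 / \<mu>)"
  define d where "d = (x * s + 1) * (x * \<mu> + 1)"
  have "0 \<le> x * s" "0 \<le> x * \<mu>" using assms \<open>0 < \<mu>\<close> by simp_all
  then have d: "1 \<le> d"
    using mult_mono[of 1 "x * s + 1" 1 "x * \<mu> + 1"] by (simp add: d_def)
  have "1 / (x + 1 / t) = t / (x * t + 1)" if "0 < t" for t
    using that by (simp add: field_simps)
  then have "p = s / (x * s + 1) - \<mu> / (x * \<mu> + 1)"
    using assms \<open>0 < \<mu>\<close> by (simp add: p_def)
  also have "\<dots> = (s - \<mu>) / d"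
    using \<open>0 \<le> x * s\<close> \<open>0 \<le> x * \<mu>\<close> by (simp add: d_def diff_frac_eq algebra_simps)
  finally have "\<bar>p\<bar> = \<bar>s - \<mu>\<bar> / d" using d by (simp add: abs_divide)
  also have "\<dots> \<le> \<bar>s - \<mu>\<bar> / 1" using d by (intro divide_left_mono) auto
  finally have "\<bar>p\<bar> \<le> \<bar>s - \<mu>\<bar>" by simp
  then have p: "p\<^sup>2 \<le> (s - \<mu>)\<^sup>2" by (metis abs_le_square_iff power2_abs)
  have "a * m \<le> 1 / \<mu>" using assms \<open>0 < \<mu>\<close> by (simp add: field_simps)
  then have "a * (m + 1) \<le> a + 1 / \<mu>" "a * (m + 1) \<le> x + 1 / \<mu>"
    using assms by (auto simp: algebra_simps)
  then have "q\<^sup>2 \<le> (x - a)\<^sup>2 / (a * (m + 1)) ^ 4"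
    unfolding q_def using assms sq_diff_inverse_le[of "a * (m + 1)" "x + 1 / \<mu>" "a + 1 / \<mu>"] by simp
  also have "\<dots> \<le> (b - a)\<^sup>2 / (a * (m + 1)) ^ 4"
    using assms by (intro divide_right_mono power_mono) auto
  finally have q: "q\<^sup>2 \<le> (b - a)\<^sup>2 / (a ^ 4 * (m + 1) ^ 4)" by (simp add: power_mult_distrib)
  have "(p + q)\<^sup>2 \<le> 5/4 * p\<^sup>2 + 5 * q\<^sup>2"
    using zero_le_power2[of "p / 2 - 2 * q"] by (simp add: power2_eq_square algebra_simps)
  then show ?thesis using p q by (simp add: p_def q_def)
qed

text \<open>For m \<le> 13 the trivial bound Var C_m \<le> (1 / (a m))^2 suffices, whence 169 = 13^2.
  For m \<ge> 13 we have (1 + 1/m)^4 \<le> 7/5, so the recursion contracts by 5/8 * 7/5 = 7/8,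
  and the factor 40 makes the additive error at most an eighth of the bound.\<close>

definition var_const :: "real \<Rightarrow> real \<Rightarrow> real" where
  "var_const a b = max (169 / a\<^sup>2) (40 * ((b - a)\<^sup>2 / a ^ 4))"

lemma inverse_sq_le_var_const:
  fixes a b m :: real
  assumes "0 < a" "1 \<le> m" "m \<le> 13"
  shows "1 / (a * m)\<^sup>2 \<le> var_const a b / m ^ 4"
proof -
  have "m\<^sup>2 \<le> 13\<^sup>2" using assms by (intro power_mono) auto
  then have "m\<^sup>2 / a\<^sup>2 \<le> 169 / a\<^sup>2" by (intro divide_right_mono) auto
  also have "\<dots> \<le> var_const a b" by (simp add: var_const_def)
  finally have "m\<^sup>2 / a\<^sup>2 \<le> var_const a b" .
  then have "m\<^sup>2 / a\<^sup>2 / m ^ 4 \<le> var_const a b / m ^ 4"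
    by (rule divide_right_mono) simp
  moreover have "1 / (a * m)\<^sup>2 = m\<^sup>2 / a\<^sup>2 / m ^ 4"
    using assms by (simp add: field_simps power2_eq_square power4_eq_xxxx)
  ultimately show ?thesis by simp
qed

lemma var_const_step:
  fixes a b m :: real
  assumes "13 \<le> m"
  shows "5/8 * (var_const a b / m ^ 4) + 5 * ((b - a)\<^sup>2 / (a ^ 4 * (m + 1) ^ 4))
    \<le> var_const a b / (m + 1) ^ 4"
proof -
  define d where "d = var_const a b"
  have "0 < m" using assms by simp
  have "0 \<le> d" by (simp add: d_def var_const_def le_max_iff_disj)
  have "((m + 1) / m) ^ 4 \<le> (14/13) ^ 4"
    using assms \<open>0 < m\<close> by (intro power_mono) (simp_all add: divide_le_eq)
  then have "(m + 1) ^ 4 \<le> (14/13) ^ 4 * m ^ 4"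
    using \<open>0 < m\<close> by (simp add: power_divide divide_le_eq)
  also have "\<dots> \<le> 7/5 * m ^ 4" by (intro mult_right_mono) (simp_all add: power_divide)
  finally have "(m + 1) ^ 4 \<le> 7/5 * m ^ 4" .
  then have "5/8 * d * (m + 1) ^ 4 \<le> 5/8 * d * (7/5 * m ^ 4)"
    using \<open>0 \<le> d\<close> by (intro mult_left_mono) auto
  then have "5/8 * (d / m ^ 4) \<le> 7/8 * d / (m + 1) ^ 4"
    using \<open>0 < m\<close> by (simp add: field_simps)
  moreover have "5 * ((b - a)\<^sup>2 / (a ^ 4 * (m + 1) ^ 4)) = 5 * ((b - a)\<^sup>2 / a ^ 4) / (m + 1) ^ 4"
    by simp
  moreover have "\<dots> \<le> 1/8 * d / (m + 1) ^ 4"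
    by (intro divide_right_mono) (auto simp: d_def var_const_def)
  moreover have "7/8 * d / (m + 1) ^ 4 + 1/8 * d / (m + 1) ^ 4 = d / (m + 1) ^ 4"
    by (simp add: add_divide_distrib[symmetric])
  ultimately show ?thesis unfolding d_def by linarith
qed

section \<open>Moments and independence\<close>

lemma (in prob_space) integrable_AE_abs_le:
  fixes f :: "'a \<Rightarrow> real"
  assumes "f \<in> borel_measurable M" "AE x in M. \<bar>f x\<bar> \<le> B"
  shows "integrable M f"
  using assms by (intro integrable_const_bound[where B=B]) auto

lemma (in prob_space) expectation_AE_between:
  fixes f :: "'a \<Rightarrow> real"
  assumes "f \<in> borel_measurable M" "AE x in M. l \<le> f x \<and> f x \<le> u"
  shows "l \<le> expectation f \<and> expectation f \<le> u"
proof -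
  have "AE x in M. \<bar>f x\<bar> \<le> \<bar>l\<bar> + \<bar>u\<bar>" using assms(2) by eventually_elim auto
  then have "integrable M f" by (rule integrable_AE_abs_le[OF assms(1)])
  then have "expectation (\<lambda>_. l) \<le> expectation f" "expectation f \<le> expectation (\<lambda>_. u)"
    using assms(2) by (intro integral_mono_AE; auto elim: eventually_mono)+
  then show ?thesis by (simp add: prob_space)
qed

lemma (in prob_space) variance_le_expectation_sq_diff:
  fixes f :: "'a \<Rightarrow> real"
  assumes "integrable M f" "integrable M (\<lambda>x. (f x)\<^sup>2)"
  shows "variance f \<le> expectation (\<lambda>x. (f x - c)\<^sup>2)"
proof -
  have "(\<lambda>x. (f x - c)\<^sup>2) = (\<lambda>x. (f x)\<^sup>2 - (2 * c * f x - c\<^sup>2))"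
    by (auto simp: power2_eq_square algebra_simps)
  then have "expectation (\<lambda>x. (f x - c)\<^sup>2) = expectation (\<lambda>x. (f x)\<^sup>2) - 2 * c * expectation f + c\<^sup>2"
    using assms by (simp add: prob_space)
  moreover have "0 \<le> (expectation f - c)\<^sup>2" by simp
  ultimately show ?thesis
    using variance_eq[OF assms] by (simp add: power2_eq_square algebra_simps)
qed

lemma (in prob_space) variance_midpoint:
  fixes f g :: "'a \<Rightarrow> real"
  assumes "f \<in> borel_measurable M" "g \<in> borel_measurable M"
    and "AE x in M. \<bar>f x\<bar> \<le> B" "AE x in M. \<bar>g x\<bar> \<le> B"
    and uncorrelated: "expectation (\<lambda>x. (f x - expectation f) * (g x - expectation g)) = 0"
  shows "variance (\<lambda>x. (f x + g x) / 2) = (variance f + variance g) / 4"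
proof -
  define F where "F x = f x - expectation f" for x
  define G where "G x = g x - expectation g" for x
  have abs_mult_le_sq: "\<bar>u * v\<bar> \<le> c\<^sup>2" if "\<bar>u\<bar> \<le> c" "\<bar>v\<bar> \<le> c" for u v c :: real
    using that by (simp add: abs_mult power2_eq_square mult_mono)
  have abs_sq_le_sq: "\<bar>u\<^sup>2\<bar> \<le> c\<^sup>2" if "\<bar>u\<bar> \<le> c" for u c :: real
    using abs_mult_le_sq[OF that that] by (simp add: power2_eq_square)
  have between: "AE x in M. -B \<le> h x \<and> h x \<le> B" if "AE x in M. \<bar>h x\<bar> \<le> B" for h :: "'a \<Rightarrow> real"
    using that by eventually_elim auto
  have "\<bar>expectation f\<bar> \<le> B \<and> \<bar>expectation g\<bar> \<le> B"
    using expectation_AE_between[OF assms(1) between[OF assms(3)]]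
      expectation_AE_between[OF assms(2) between[OF assms(4)]] by auto
  with assms(3,4) have "AE x in M. \<bar>F x\<bar> \<le> 2 * B \<and> \<bar>G x\<bar> \<le> 2 * B"
    by (auto simp: F_def G_def abs_le_iff elim!: eventually_elim2)
  then have "AE x in M. \<bar>(F x)\<^sup>2\<bar> \<le> (2 * B)\<^sup>2 \<and> \<bar>(G x)\<^sup>2\<bar> \<le> (2 * B)\<^sup>2 \<and> \<bar>F x * G x\<bar> \<le> (2 * B)\<^sup>2"
    by eventually_elim (blast intro: abs_mult_le_sq abs_sq_le_sq)
  moreover have "F \<in> borel_measurable M" "G \<in> borel_measurable M"
    using assms(1,2) unfolding F_def G_def by measurable
  ultimately have ints: "integrable M (\<lambda>x. (F x)\<^sup>2)" "integrable M (\<lambda>x. (G x)\<^sup>2)"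
    "integrable M (\<lambda>x. F x * G x)"
    by (auto intro!: integrable_AE_abs_le elim: eventually_mono)
  have "expectation (\<lambda>x. (f x + g x) / 2) = (expectation f + expectation g) / 2"
    using integrable_AE_abs_le[OF assms(1,3)] integrable_AE_abs_le[OF assms(2,4)] by simp
  then have "variance (\<lambda>x. (f x + g x) / 2)
      = expectation (\<lambda>x. ((f x + g x) / 2 - (expectation f + expectation g) / 2)\<^sup>2)"
    by simp
  also have "\<dots> = expectation (\<lambda>x. ((F x)\<^sup>2 + (G x)\<^sup>2 + 2 * (F x * G x)) / 4)"
    by (rule Bochner_Integration.integral_cong) (simp_all add: F_def G_def power2_eq_square field_simps)
  finally have "variance (\<lambda>x. (f x + g x) / 2) = expectation (\<lambda>x. ((F x)\<^sup>2 + (G x)\<^sup>2 + 2 * (F x * G x)) / 4)" .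
  then show ?thesis using ints uncorrelated by (simp add: F_def G_def)
qed

lemma indep_vars_PiM_components:
  assumes "\<And>i. i \<in> I \<Longrightarrow> prob_space (M i)"
  shows "prob_space.indep_vars (PiM I M) M (\<lambda>i \<omega>. \<omega> i) I"
proof -
  interpret prob_space "PiM I M" by (rule prob_space_PiM) fact
  show ?thesis
  proof (cases "I = {}")
    case True
    then show ?thesis unfolding indep_vars_def indep_sets_def by auto
  next
    case False
    have "distr (PiM I M) (PiM I M) (\<lambda>\<omega>. \<lambda>i\<in>I. \<omega> i) = distr (PiM I M) (PiM I M) (\<lambda>\<omega>. \<omega>)"
      by (rule distr_cong) (auto simp: space_PiM PiE_def extensional_restrict)
    also have "\<dots> = PiM I (\<lambda>i. distr (PiM I M) (M i) (\<lambda>\<omega>. \<omega> i))"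
      using assms by (auto intro!: PiM_cong simp: distr_PiM_component)
    finally show ?thesis
      using False by (subst indep_vars_iff_distr_eq_PiM') auto
  qed
qed

lemma integral_mult_PiM_restrict_disjoint:
  fixes f g :: "('i \<Rightarrow> 'a) \<Rightarrow> real"
  assumes "\<And>i. i \<in> I \<Longrightarrow> prob_space (M i)" "A \<inter> B = {}" "A \<subseteq> I" "B \<subseteq> I"
    and "f \<in> borel_measurable (PiM A M)" "g \<in> borel_measurable (PiM B M)"
    and "integrable (PiM I M) (\<lambda>\<omega>. f (restrict \<omega> A))" "integrable (PiM I M) (\<lambda>\<omega>. g (restrict \<omega> B))"
  shows "(\<integral>\<omega>. f (restrict \<omega> A) * g (restrict \<omega> B) \<partial>PiM I M)
    = (\<integral>\<omega>. f (restrict \<omega> A) \<partial>PiM I M) * (\<integral>\<omega>. g (restrict \<omega> B) \<partial>PiM I M)"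
proof -
  interpret prob_space "PiM I M" by (rule prob_space_PiM) fact
  have "indep_var (PiM A M) (\<lambda>\<omega>. restrict \<omega> A) (PiM B M) (\<lambda>\<omega>. restrict \<omega> B)"
    using indep_var_restrict[OF indep_vars_PiM_components[OF assms(1)] assms(2-4)] by simp
  then have "indep_var borel (\<lambda>\<omega>. f (restrict \<omega> A)) borel (\<lambda>\<omega>. g (restrict \<omega> B))"
    using indep_var_compose[unfolded comp_def, OF _ assms(5,6)] by blast
  then show ?thesis using assms(7,8) by (rule indep_var_lebesgue_integral)
qed

lemma (in prob_space) variance_series_cond_le:
  fixes X S :: "'a \<Rightarrow> real" and a b m :: real
  assumes "X \<in> borel_measurable M" "S \<in> borel_measurable M" "0 < a" "0 < m"
    and bounds: "AE \<omega> in M. a \<le> X \<omega> \<and> X \<omega> \<le> b \<and> 1 / (b * m) \<le> S \<omega> \<and> S \<omega> \<le> 1 / (a * m)"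
  shows "variance (\<lambda>\<omega>. 1 / (X \<omega> + 1 / S \<omega>))
    \<le> 5/4 * variance S + 5 * ((b - a)\<^sup>2 / (a ^ 4 * (m + 1) ^ 4))"
proof -
  define Z where "Z = (\<lambda>\<omega>. 1 / (X \<omega> + 1 / S \<omega>))"
  define \<mu> where "\<mu> = expectation S"
  define \<beta> where "\<beta> = (b - a)\<^sup>2 / (a ^ 4 * (m + 1) ^ 4)"
  have Z_meas: "Z \<in> borel_measurable M" unfolding Z_def using assms(1,2) by measurable
  have AE_S: "AE \<omega> in M. a \<le> X \<omega> \<and> X \<omega> \<le> b \<and> 0 < S \<omega> \<and> 1 / (b * m) \<le> S \<omega> \<and> S \<omega> \<le> 1 / (a * m)"
    using bounds
  proof eventually_elim
    case (elim \<omega>)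
    then have "0 < b" using assms(3) by linarith
    then have "0 < 1 / (b * m)" using assms(4) by simp
    moreover have "1 / (b * m) \<le> S \<omega>" using elim by blast
    ultimately have "0 < S \<omega>" by linarith
    with elim show ?case by blast
  qed
  then have \<mu>: "1 / (b * m) \<le> \<mu> \<and> \<mu> \<le> 1 / (a * m)"
    unfolding \<mu>_def by (intro expectation_AE_between[OF assms(2)]) (auto elim: eventually_mono)
  have "AE \<omega> in M. \<bar>Z \<omega>\<bar> \<le> 1 / a \<and> \<bar>(Z \<omega>)\<^sup>2\<bar> \<le> (1 / a)\<^sup>2"
    using AE_S
  proof eventually_elim
    case (elim \<omega>)
    then have "a \<le> X \<omega> + 1 / S \<omega>" by (simp add: add_increasing2)
    then have "0 \<le> Z \<omega> \<and> Z \<omega> \<le> 1 / a" using assms(3) by (simp add: Z_def frac_le)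
    then show ?case by (simp add: power_mono)
  qed
  then have "integrable M Z" "integrable M (\<lambda>\<omega>. (Z \<omega>)\<^sup>2)"
    using Z_meas by (auto intro!: integrable_AE_abs_le elim: eventually_mono)
  have "0 \<le> \<mu>" unfolding \<mu>_def using AE_S by (intro integral_nonneg_AE) (auto elim: eventually_mono)
  have "AE \<omega> in M. \<bar>(S \<omega> - \<mu>)\<^sup>2\<bar> \<le> (1 / (a * m))\<^sup>2"
    using AE_S by eventually_elim (use \<mu> \<open>0 \<le> \<mu>\<close> assms(3,4) in \<open>auto simp: abs_le_iff simp flip: abs_le_square_iff\<close>)
  then have int_S: "integrable M (\<lambda>\<omega>. (S \<omega> - \<mu>)\<^sup>2)"
    using assms(2) by (intro integrable_AE_abs_le) auto
  \<comment> \<open>compare with the value at the deterministic point X = a, S = \<mu>\<close>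
  have "variance Z \<le> expectation (\<lambda>\<omega>. (Z \<omega> - 1 / (a + 1 / \<mu>))\<^sup>2)"
    by (rule variance_le_expectation_sq_diff) fact+
  also have "\<dots> \<le> expectation (\<lambda>\<omega>. 5/4 * (S \<omega> - \<mu>)\<^sup>2 + 5 * \<beta>)"
  proof (rule integral_mono_AE')
    show "integrable M (\<lambda>\<omega>. 5/4 * (S \<omega> - \<mu>)\<^sup>2 + 5 * \<beta>)" using int_S by simp
    show "AE \<omega> in M. 0 \<le> 5/4 * (S \<omega> - \<mu>)\<^sup>2 + 5 * \<beta>" by (simp add: \<beta>_def)
    show "AE \<omega> in M. (Z \<omega> - 1 / (a + 1 / \<mu>))\<^sup>2 \<le> 5/4 * (S \<omega> - \<mu>)\<^sup>2 + 5 * \<beta>"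
      using AE_S
    proof eventually_elim
      case (elim \<omega>)
      then show ?case
        unfolding Z_def \<beta>_def using \<mu> assms(3,4) by (intro sq_diff_series_cond_le) auto
    qed
  qed
  also have "\<dots> = 5/4 * variance S + 5 * \<beta>"
    using int_S by (simp add: \<mu>_def prob_space)
  finally show ?thesis by (simp add: Z_def \<beta>_def)
qed

lemma (in prob_space) variance_series_parallel_step:
  fixes X c1 c2 :: "'a \<Rightarrow> real" and a b m :: real
  assumes "X \<in> borel_measurable M" "c1 \<in> borel_measurable M" "c2 \<in> borel_measurable M"
    and "0 < a" "0 < m"
    and bounds: "AE \<omega> in M. a \<le> X \<omega> \<and> X \<omega> \<le> b
        \<and> 1 / (b * m) \<le> c1 \<omega> \<and> c1 \<omega> \<le> 1 / (a * m) \<and> 1 / (b * m) \<le> c2 \<omega> \<and> c2 \<omega> \<le> 1 / (a * m)"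
    and uncorrelated: "expectation (\<lambda>\<omega>. (c1 \<omega> - expectation c1) * (c2 \<omega> - expectation c2)) = 0"
  shows "variance (\<lambda>\<omega>. 1 / (X \<omega> + 2 / (c1 \<omega> + c2 \<omega>)))
    \<le> 5/16 * (variance c1 + variance c2) + 5 * ((b - a)\<^sup>2 / (a ^ 4 * (m + 1) ^ 4))"
proof -
  define S where "S = (\<lambda>\<omega>. (c1 \<omega> + c2 \<omega>) / 2)"
  have S_meas: "S \<in> borel_measurable M" unfolding S_def using assms(2,3) by measurable
  have "AE \<omega> in M. (a \<le> X \<omega> \<and> X \<omega> \<le> b \<and> 1 / (b * m) \<le> S \<omega> \<and> S \<omega> \<le> 1 / (a * m))
      \<and> \<bar>c1 \<omega>\<bar> \<le> 1 / (a * m) \<and> \<bar>c2 \<omega>\<bar> \<le> 1 / (a * m)"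
    using bounds
  proof eventually_elim
    case (elim \<omega>)
    then have "0 < b" using assms(4) by linarith
    then have "0 < 1 / (b * m)" using assms(5) by simp
    with elim show ?case unfolding S_def abs_le_iff by argo
  qed
  then have S_bounds: "AE \<omega> in M. a \<le> X \<omega> \<and> X \<omega> \<le> b \<and> 1 / (b * m) \<le> S \<omega> \<and> S \<omega> \<le> 1 / (a * m)"
    and "AE \<omega> in M. \<bar>c1 \<omega>\<bar> \<le> 1 / (a * m)" "AE \<omega> in M. \<bar>c2 \<omega>\<bar> \<le> 1 / (a * m)"
    by (auto elim: eventually_mono)
  then have "variance S = (variance c1 + variance c2) / 4"
    unfolding S_def using assms(2,3) uncorrelated by (intro variance_midpoint)
  moreover have "1 / (X \<omega> + 1 / S \<omega>) = 1 / (X \<omega> + 2 / (c1 \<omega> + c2 \<omega>))" for \<omega>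
    by (simp add: S_def)
  then have "variance (\<lambda>\<omega>. 1 / (X \<omega> + 2 / (c1 \<omega> + c2 \<omega>)))
      \<le> 5/4 * variance S + 5 * ((b - a)\<^sup>2 / (a ^ 4 * (m + 1) ^ 4))"
    using variance_series_cond_le[OF assms(1) S_meas assms(4,5) S_bounds] by (simp only:)
  ultimately show ?thesis by argo
qed

lemma (in prob_space) prob_abs_gt_le_second_moment:
  fixes f :: "'a \<Rightarrow> real"
  assumes "f \<in> borel_measurable M" "integrable M (\<lambda>x. (f x)\<^sup>2)" "0 < t"
  shows "prob {x \<in> space M. t < \<bar>f x\<bar>} \<le> expectation (\<lambda>x. (f x)\<^sup>2) / t\<^sup>2"
proof -
  have "prob {x \<in> space M. t < \<bar>f x\<bar>} \<le> prob {x \<in> space M. t \<le> \<bar>f x\<bar>}"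
    using assms(1) by (intro finite_measure_mono) auto
  also have "\<dots> \<le> expectation (\<lambda>x. (f x)\<^sup>2) / t\<^sup>2"
    using assms by (intro second_moment_method) auto
  finally show ?thesis .
qed

lemma abs_le_1_plus_sq: "\<bar>y :: real\<bar> \<le> 1 + y\<^sup>2"
  using zero_le_power2[of "\<bar>y\<bar> - 1/2"] by (simp add: power2_eq_square algebra_simps)

lemma (in prob_space) expectation_abs_le_1_plus_second_moment:
  fixes f :: "'a \<Rightarrow> real"
  assumes "f \<in> borel_measurable M" "integrable M (\<lambda>x. (f x)\<^sup>2)"
  shows "expectation (\<lambda>x. \<bar>f x\<bar>) \<le> 1 + expectation (\<lambda>x. (f x)\<^sup>2)"
proof -
  have "integrable M f" using assms by (rule square_integrable_imp_integrable)
  then have "expectation (\<lambda>x. \<bar>f x\<bar>) \<le> expectation (\<lambda>x. 1 + (f x)\<^sup>2)"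
    using assms(2) by (intro integral_mono abs_le_1_plus_sq) auto
  then show ?thesis using assms(2) by (simp add: prob_space)
qed

section \<open>The random tree\<close>

lemma finite_tree_edges: "finite (tree_edges n)"
proof -
  have "tree_edges n \<subseteq> {xs. set xs \<subseteq> UNIV \<and> length xs \<le> n}"
    by (auto simp: tree_edges_def)
  then show ?thesis by (rule finite_subset) (rule finite_lists_length_le; simp)
qed

lemma sub_cond_restrict:
  "(\<And>q. length q < m \<Longrightarrow> p @ q \<in> A) \<Longrightarrow> sub_cond (restrict X A) m p = sub_cond X m p"
  unfolding sub_cond_def by (subst sub_res_cong[where Y=X]) auto

lemma measurable_component_borel:
  "sets D = sets borel \<Longrightarrow> i \<in> K \<Longrightarrow> (\<lambda>X. X i) \<in> borel_measurable (PiM K (\<lambda>_. D))"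
  using measurable_component_singleton[of i K "\<lambda>_. D"] measurable_cong_sets[OF refl] by blast

lemma measurable_sub_res:
  assumes "sets D = sets borel" "\<And>q. length q < m \<Longrightarrow> p @ q \<in> K"
  shows "(\<lambda>X. sub_res X m p) \<in> borel_measurable (PiM K (\<lambda>_. D))"
  using assms(2)
proof (induction m arbitrary: p)
  case (Suc m)
  have [measurable]: "(\<lambda>X. X p) \<in> borel_measurable (PiM K (\<lambda>_. D))"
    using Suc.prems[of "[]"] by (intro measurable_component_borel[OF assms(1)]) simp
  have [measurable]: "(\<lambda>X. sub_res X m (p @ [c])) \<in> borel_measurable (PiM K (\<lambda>_. D))" for c
    by (rule Suc.IH) (use Suc.prems[of "c # _"] in auto)
  have sub_res_Suc_eq: "sub_res X (Suc m) p = (if m = 0 then edge_res X p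
      else edge_res X p + 1 / (1 / sub_res X m (p @ [False]) + 1 / sub_res X m (p @ [True])))" for X
    by (cases m) auto
  show ?case unfolding sub_res_Suc_eq edge_res_def by measurable
qed simp

lemma measurable_sub_cond:
  assumes "sets D = sets borel" "\<And>q. length q < m \<Longrightarrow> p @ q \<in> K"
  shows "(\<lambda>X. sub_cond X m p) \<in> borel_measurable (PiM K (\<lambda>_. D))"
  unfolding sub_cond_def using measurable_sub_res[OF assms] by measurable

locale bounded_iid_tree =
  fixes D :: "real measure" and a b :: real and n :: nat
  assumes prob_space_D: "prob_space D" and sets_D: "sets D = sets borel"
    and AE_D: "AE x in D. a \<le> x \<and> x \<le> b" and a_pos: "0 < a"
begin

lemma a_le_b: "a \<le> b"
proof -
  have "AE x in D. a \<le> b" using AE_D by eventually_elim simp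
  then show ?thesis using prob_space.AE_const[OF prob_space_D] by simp
qed

sublocale prob_space "tree_space D n"
  unfolding tree_space_def by (rule prob_space_PiM) (use prob_space_D in auto)

lemma AE_tree_weights: "AE X in tree_space D n. \<forall>p \<in> tree_edges n. a \<le> X p \<and> X p \<le> b"
  unfolding tree_space_def using finite_tree_edges AE_D prob_space_D
  by (auto intro!: eventually_ball_finite AE_PiM_component)

lemma measurable_sub_cond_tree:
  "length p + m \<le> n \<Longrightarrow> (\<lambda>X. sub_cond X m p) \<in> borel_measurable (tree_space D n)"
  unfolding tree_space_def by (rule measurable_sub_cond[OF sets_D]) (simp add: tree_edges_def)

lemma AE_sub_cond_bounds:
  assumes "1 \<le> m" "length p + m \<le> n"
  shows "AE X in tree_space D n. 1 / (b * m) \<le> sub_cond X m p \<and> sub_cond X m p \<le> 1 / (a * m)"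
  using AE_tree_weights
proof eventually_elim
  case (elim X)
  then show ?case
    using assms by (intro sub_cond_bounds[OF a_pos]) (auto simp: tree_edges_def)
qed

lemma AE_abs_sub_cond_le:
  assumes "1 \<le> m" "length p + m \<le> n"
  shows "AE X in tree_space D n. \<bar>sub_cond X m p\<bar> \<le> 1 / (a * m)"
proof -
  have "0 < 1 / (b * m)" using a_pos a_le_b assms(1) by simp
  with AE_sub_cond_bounds[OF assms] show ?thesis
    by (auto simp only: abs_le_iff elim!: eventually_mono)
qed

lemma integrable_sub_cond:
  assumes "1 \<le> m" "length p + m \<le> n"
  shows "integrable (tree_space D n) (\<lambda>X. sub_cond X m p)"
  by (rule integrable_AE_abs_le[OF measurable_sub_cond_tree[OF assms(2)] AE_abs_sub_cond_le[OF assms]])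

lemma integrable_sq_sub_cond_diff:
  assumes "1 \<le> m" "length p + m \<le> n"
  shows "integrable (tree_space D n) (\<lambda>X. (sub_cond X m p - t)\<^sup>2)"
proof (rule integrable_AE_abs_le)
  show "(\<lambda>X. (sub_cond X m p - t)\<^sup>2) \<in> borel_measurable (tree_space D n)"
    using measurable_sub_cond_tree[OF assms(2)] by measurable
  show "AE X in tree_space D n. \<bar>(sub_cond X m p - t)\<^sup>2\<bar> \<le> (1 / (a * m) + \<bar>t\<bar>)\<^sup>2"
    using AE_abs_sub_cond_le[OF assms] by eventually_elim (simp flip: abs_le_square_iff)
qed

lemma sub_cond_children_uncorrelated:
  assumes "1 \<le> m" "length p + Suc m \<le> n"
  defines "c \<equiv> \<lambda>t X. sub_cond X m (p @ [t])"
  shows "expectation (\<lambda>X. (c False X - expectation (c False)) * (c True X - expectation (c True))) = 0"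
proof -
  define A where "A t = {(p @ [t]) @ q | q. length q < m}" for t
  have A: "(p @ [t]) @ q \<in> A t" if "length q < m" for t q using that by (auto simp: A_def)
  have sub: "A t \<subseteq> tree_edges n" for t using assms(2) by (auto simp: A_def tree_edges_def)
  have disj: "A False \<inter> A True = {}" by (auto simp: A_def)
  have meas: "(\<lambda>Y. c t Y - expectation (c t)) \<in> borel_measurable (PiM (A t) (\<lambda>_. D))" for t
    unfolding c_def using measurable_sub_cond[OF sets_D A] by measurable
  have int: "integrable (tree_space D n) (c t)" for t
    unfolding c_def using assms(1,2) by (intro integrable_sub_cond) auto
  have restrict: "c t (restrict X (A t)) = c t X" for t X
    unfolding c_def using A by (rule sub_cond_restrict)
  have "expectation (\<lambda>X. (c False (restrict X (A False)) - expectation (c False))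
        * (c True (restrict X (A True)) - expectation (c True)))
      = expectation (\<lambda>X. c False (restrict X (A False)) - expectation (c False))
        * expectation (\<lambda>X. c True (restrict X (A True)) - expectation (c True))"
    by (intro integral_mult_PiM_restrict_disjoint[where M="\<lambda>_. D" and I="tree_edges n"
          and f="\<lambda>Y. c False Y - expectation (c False)" and g="\<lambda>Y. c True Y - expectation (c True)",
          folded tree_space_def])
      (use prob_space_D sub disj meas int restrict in simp_all)
  then have "expectation (\<lambda>X. (c False X - expectation (c False)) * (c True X - expectation (c True)))
      = expectation (\<lambda>X. c False X - expectation (c False)) * expectation (\<lambda>X. c True X - expectation (c True))"
    by (simp only: restrict)
  also have "expectation (\<lambda>X. c False X - expectation (c False)) = 0"
    using int by (simp add: prob_space)
  finally show ?thesis by simp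
qed

lemma variance_sub_cond_le_inverse_sq:
  assumes "1 \<le> m" "length p + m \<le> n"
  shows "variance (\<lambda>X. sub_cond X m p) \<le> 1 / (a * m)\<^sup>2"
proof -
  have "variance (\<lambda>X. sub_cond X m p) \<le> expectation (\<lambda>X. (sub_cond X m p - 0)\<^sup>2)"
    using integrable_sub_cond[OF assms] integrable_sq_sub_cond_diff[OF assms, of 0]
    by (intro variance_le_expectation_sq_diff) auto
  also have "\<dots> \<le> expectation (\<lambda>_. (1 / (a * m))\<^sup>2)"
    using AE_abs_sub_cond_le[OF assms] a_pos
    by (intro integral_mono_AE') (auto elim!: eventually_mono simp flip: abs_le_square_iff)
  finally show ?thesis by (simp add: prob_space power_divide)
qed

lemma variance_sub_cond_Suc_le:
  assumes "2 \<le> m" "length p + Suc m \<le> n"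
  shows "variance (\<lambda>X. sub_cond X (Suc m) p)
    \<le> 5/16 * (variance (\<lambda>X. sub_cond X m (p @ [False])) + variance (\<lambda>X. sub_cond X m (p @ [True])))
      + 5 * ((b - a)\<^sup>2 / (a ^ 4 * (real m + 1) ^ 4))"
proof -
  define c where "c = (\<lambda>t X. sub_cond X m (p @ [t]))"
  have m: "1 \<le> m" using assms(1) by simp
  have len: "length (p @ [t]) + m \<le> n" for t using assms(2) by simp
  have "p \<in> tree_edges n" using assms(2) by (simp add: tree_edges_def)
  have "AE X in tree_space D n. a \<le> X p \<and> X p \<le> b"
    using AE_tree_weights by eventually_elim (use \<open>p \<in> tree_edges n\<close> in blast)
  then have bounds: "AE X in tree_space D n. a \<le> X p \<and> X p \<le> b
      \<and> 1 / (b * m) \<le> c False X \<and> c False X \<le> 1 / (a * m)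
      \<and> 1 / (b * m) \<le> c True X \<and> c True X \<le> 1 / (a * m)"
    using AE_sub_cond_bounds[OF m len[of False]] AE_sub_cond_bounds[OF m len[of True]]
    unfolding c_def by eventually_elim blast
  obtain k where "m = Suc k" using assms(1) by (cases m) auto
  then have recursion: "sub_cond X (Suc m) p = 1 / (X p + 2 / (c False X + c True X))" for X
    unfolding c_def by (simp only: sub_cond_Suc_Suc)
  moreover have "variance (\<lambda>X. 1 / (X p + 2 / (c False X + c True X)))
      \<le> 5/16 * (variance (c False) + variance (c True)) + 5 * ((b - a)\<^sup>2 / (a ^ 4 * (real m + 1) ^ 4))"
  proof (rule variance_series_parallel_step[OF _ _ _ a_pos _ bounds])
    show "(\<lambda>X. X p) \<in> borel_measurable (tree_space D n)"
      unfolding tree_space_def using \<open>p \<in> tree_edges n\<close> by (rule measurable_component_borel[OF sets_D])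
    show "c False \<in> borel_measurable (tree_space D n)" "c True \<in> borel_measurable (tree_space D n)"
      unfolding c_def by (rule measurable_sub_cond_tree[OF len])+
    show "0 < real m" using m by simp
    show "expectation (\<lambda>X. (c False X - expectation (c False)) * (c True X - expectation (c True))) = 0"
      unfolding c_def by (rule sub_cond_children_uncorrelated[OF m assms(2)])
  qed
  ultimately show ?thesis by (simp only: recursion) (simp add: c_def)
qed

lemma variance_sub_cond_le:
  assumes "1 \<le> m" "length p + m \<le> n"
  shows "variance (\<lambda>X. sub_cond X m p) \<le> var_const a b / real m ^ 4"
  using assms
proof (induction m arbitrary: p rule: nat_induct_at_least)
  case base
  then show ?case
    using variance_sub_cond_le_inverse_sq[of 1 p] inverse_sq_le_var_const[OF a_pos, of 1 b] by simp
next
  case (Suc m)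
  show ?case
  proof (cases "m < 13")
    case True
    then show ?thesis
      using variance_sub_cond_le_inverse_sq[OF _ Suc.prems] inverse_sq_le_var_const[OF a_pos, of "Suc m" b]
      by simp
  next
    case False
    have len: "length (p @ [t]) + m \<le> n" for t using Suc.prems by simp
    have "2 \<le> m" using False by simp
    have "variance (\<lambda>X. sub_cond X (Suc m) p)
        \<le> 5/8 * (var_const a b / real m ^ 4) + 5 * ((b - a)\<^sup>2 / (a ^ 4 * (real m + 1) ^ 4))"
      using variance_sub_cond_Suc_le[OF \<open>2 \<le> m\<close> Suc.prems] Suc.IH[OF len[of False]] Suc.IH[OF len[of True]]
      by argo
    also have "\<dots> \<le> var_const a b / (real m + 1) ^ 4"
      using False by (intro var_const_step) simp
    finally show ?thesis by (simp add: add.commute)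
  qed
qed

lemma second_moment_eff_res_deviation:
  assumes "1 \<le> n"
  defines "c \<equiv> 1 / expectation (\<lambda>X. eff_cond X n)"
  shows "integrable (tree_space D n) (\<lambda>X. (eff_res X n - c)\<^sup>2)"
    and "expectation (\<lambda>X. (eff_res X n - c)\<^sup>2) \<le> b ^ 4 * var_const a b"
proof -
  define C where "C = (\<lambda>X. sub_cond X n [])"
  define EC where "EC = expectation C"
  have len: "length [] + n \<le> n" by simp
  have C_meas: "C \<in> borel_measurable (tree_space D n)"
    unfolding C_def by (rule measurable_sub_cond_tree[OF len])
  have "0 < 1 / (b * n)" using a_pos a_le_b assms(1) by simp
  have bounds: "AE X in tree_space D n. 1 / (b * n) \<le> C X \<and> C X \<le> 1 / (a * n)"
    unfolding C_def by (rule AE_sub_cond_bounds[OF assms(1) len])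
  then have "1 / (b * n) \<le> EC"
    unfolding EC_def using expectation_AE_between[OF C_meas] by blast
  have c: "c = 1 / EC" by (simp add: c_def EC_def C_def eff_cond_eq_sub_cond)
  have pointwise: "AE X in tree_space D n. (eff_res X n - c)\<^sup>2 \<le> (b * n) ^ 4 * (C X - EC)\<^sup>2"
    using bounds
  proof eventually_elim
    case (elim X)
    have "(1 / C X - 1 / EC)\<^sup>2 \<le> (C X - EC)\<^sup>2 / (1 / (b * n)) ^ 4"
      using \<open>0 < 1 / (b * n)\<close> \<open>1 / (b * n) \<le> EC\<close> elim by (intro sq_diff_inverse_le) auto
    then show ?case by (simp add: c C_def eff_res_eq_inverse_sub_cond power_divide mult.commute)
  qed
  have rhs_int: "integrable (tree_space D n) (\<lambda>X. (b * n) ^ 4 * (C X - EC)\<^sup>2)"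
    unfolding C_def using integrable_sq_sub_cond_diff[OF assms(1) len] by simp
  show lhs_int: "integrable (tree_space D n) (\<lambda>X. (eff_res X n - c)\<^sup>2)"
  proof (rule Bochner_Integration.integrable_bound[OF rhs_int])
    show "(\<lambda>X. (eff_res X n - c)\<^sup>2) \<in> borel_measurable (tree_space D n)"
      using C_meas by (simp add: C_def eff_res_eq_inverse_sub_cond)
    show "AE X in tree_space D n. norm ((eff_res X n - c)\<^sup>2) \<le> norm ((b * n) ^ 4 * (C X - EC)\<^sup>2)"
      using pointwise by eventually_elim simp
  qed
  have "expectation (\<lambda>X. (eff_res X n - c)\<^sup>2) \<le> expectation (\<lambda>X. (b * n) ^ 4 * (C X - EC)\<^sup>2)"
    by (rule integral_mono_AE[OF lhs_int rhs_int pointwise])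
  also have "\<dots> = (b * n) ^ 4 * variance C" by (simp add: EC_def)
  also have "\<dots> \<le> (b * n) ^ 4 * (var_const a b / real n ^ 4)"
    unfolding C_def using variance_sub_cond_le[OF assms(1) len] by (intro mult_left_mono) auto
  also have "\<dots> = b ^ 4 * var_const a b" using assms(1) by (simp add: power_mult_distrib)
  finally show "expectation (\<lambda>X. (eff_res X n - c)\<^sup>2) \<le> b ^ 4 * var_const a b" .
qed

end

theorem corollary4:
  fixes a b :: real
  assumes "0 < a" and "a < b"
  shows "\<exists>K::real. \<forall>D :: real measure.
    (prob_space D \<and> sets D = sets borel \<and> (AE x in D. a \<le> x \<and> x \<le> b)) \<longrightarrow>
    (\<forall>n::nat. n \<ge> 1 \<longrightarrow>
      (let M = tree_space D n;
           EC = integral\<^sup>L M (\<lambda>\<omega>. eff_cond \<omega> n)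
       in (\<forall>t::real. t > 0 \<longrightarrow>
             measure M {\<omega> \<in> space M. \<bar>eff_res \<omega> n - 1 / EC\<bar> > t} \<le> K / t ^ 2)
          \<and> integral\<^sup>L M (\<lambda>\<omega>. \<bar>eff_res \<omega> n - 1 / EC\<bar>) \<le> 1 + K))"
proof (intro exI[of _ "b ^ 4 * var_const a b"] allI impI)
  fix D :: "real measure" and n :: nat
  assume "prob_space D \<and> sets D = sets borel \<and> (AE x in D. a \<le> x \<and> x \<le> b)" and "1 \<le> n"
  then have "bounded_iid_tree D a b"
    using assms(1) by (simp add: bounded_iid_tree_def)
  then interpret bounded_iid_tree D a b n .
  define c where "c = 1 / expectation (\<lambda>X. eff_cond X n)"
  have meas: "(\<lambda>X. eff_res X n - c) \<in> borel_measurable (tree_space D n)"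
    using measurable_sub_cond_tree[of "[]" n] by (simp add: eff_res_eq_inverse_sub_cond)
  note second_moment = second_moment_eff_res_deviation[OF \<open>1 \<le> n\<close>, folded c_def]
  have "prob {X \<in> space (tree_space D n). t < \<bar>eff_res X n - c\<bar>} \<le> b ^ 4 * var_const a b / t\<^sup>2"
    if "0 < t" for t
    using order_trans[OF prob_abs_gt_le_second_moment[OF meas second_moment(1) that]
        divide_right_mono[OF second_moment(2)]] by simp
  moreover have "expectation (\<lambda>X. \<bar>eff_res X n - c\<bar>) \<le> 1 + b ^ 4 * var_const a b"
    using expectation_abs_le_1_plus_second_moment[OF meas second_moment(1)] second_moment(2) by simp
  ultimately show "let M = tree_space D n; EC = integral\<^sup>L M (\<lambda>\<omega>. eff_cond \<omega> n)
       in (\<forall>t::real. t > 0 \<longrightarrow>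
             measure M {\<omega> \<in> space M. \<bar>eff_res \<omega> n - 1 / EC\<bar> > t} \<le> b ^ 4 * var_const a b / t ^ 2)
          \<and> integral\<^sup>L M (\<lambda>\<omega>. \<bar>eff_res \<omega> n - 1 / EC\<bar>) \<le> 1 + b ^ 4 * var_const a b"
    unfolding Let_def c_def[symmetric] by blast
qed

end
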